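(* Let $w$ be a factor of slope $\alpha$ and let $m$ be an abelian period of $w$ with $m\notin\mathcal{Q}_\alpha\cup\mathcal{M}_\alpha$. If $a_1\ge4$ and $(a_2-1)q_1+2<m<a_2q_1$, then $m$ is not the minimum abelian period of $w$.
   Context: $\alpha\in(0,1)$ irrational, $\alpha=[0;a_1,a_2,\ldots]$ with positive integers $a_i$, $a_1\ge2$; $q_{-1}=0$, $q_0=1$, $q_1=a_1$, $q_k=a_kq_{k-1}+q_{k-2}$ ($k\ge2$); for $k\ge2$, $1\le\ell<a_k$, $q_{k,\ell}=\ell q_{k-1}+q_{k-2}$. $\mathcal{Q}_\alpha=\{q_k:k\ge0\}\cup\{q_{k,\ell}: k\ge2,\ 1\le\ell<a_k\}$ and $\mathcal{M}_\alpha=\{tq_k: k\ge0,\ 1\le t\le a_{k+1}\}$. Sturmian words: on $\mathbb{T}=[0,1)$ with $R(\rho)=\{\rho+\alpha\}$ and either $I_0=[0,1-\alpha)$, $I_1=[1-\alpha,1)$ or $I_0=(0,1-\alpha]$, $I_1=(1-\alpha,1]$, $\mathbf{s}_{\rho,\alpha}$ has $n$-th letter $0$ iff $R^n(\rho)\in I_0$; all share the set $\mathcal{L}_\alpha$ of finite factors (factors of slope $\alpha$). Parikh vector of a binary word $u$: $(|u|_0,|u|_1)$; $P$ is contained in $Q$ if $P\le Q$ componentwise and $P\neq Q$. An abelian decomposition of $w$ is $w=u_0u_1\cdots u_{n-1}u_n$, $n\ge2$, with $u_1,\ldots,u_{n-1}$ of common Parikh vector $P$ and the Parikh vectors of $u_0,u_n$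 contained in $P$; the common length of $u_1,\dots,u_{n-1}$ is an abelian period; the minimum abelian period is the least one. *)

theory Defs
  imports Complex_Main
begin

text \<open>Complete remainders: x_0 = alpha, x_{k+1} = frac(1/x_k); then
  a_{k+1} = floor(1/x_k), so alpha = [0; a_1, a_2, ...].\<close>
fun cf_rem :: "real \<Rightarrow> nat \<Rightarrow> real" where
  "cf_rem \<alpha> 0 = \<alpha>"
| "cf_rem \<alpha> (Suc k) = frac (1 / cf_rem \<alpha> k)"

text \<open>Partial quotient a_k (meaningful for k >= 1).\<close>
definition cf_a :: "real \<Rightarrow> nat \<Rightarrow> nat" where
  "cf_a \<alpha> k = nat \<lfloor>1 / cf_rem \<alpha> (k - 1)\<rfloor>"

text \<open>Denominators q_k for k >= 0 (q_{-1} = 0, q_0 = 1, q_1 = a_1).\<close>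
fun cf_q :: "real \<Rightarrow> nat \<Rightarrow> nat" where
  "cf_q \<alpha> 0 = 1"
| "cf_q \<alpha> (Suc 0) = cf_a \<alpha> 1"
| "cf_q \<alpha> (Suc (Suc k)) = cf_a \<alpha> (k + 2) * cf_q \<alpha> (k + 1) + cf_q \<alpha> k"

definition cf_q_int :: "real \<Rightarrow> nat \<Rightarrow> nat \<Rightarrow> nat" where
  "cf_q_int \<alpha> k l = l * cf_q \<alpha> (k - 1) + cf_q \<alpha> (k - 2)"

definition Q_set :: "real \<Rightarrow> nat set" where
  "Q_set \<alpha> = {cf_q \<alpha> k | k. True} \<union>
     {cf_q_int \<alpha> k l | k l. 2 \<le> k \<and> 1 \<le> l \<and> l < cf_a \<alpha> k}"

definition M_set :: "real \<Rightarrow> nat set" where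
  "M_set \<alpha> = {t * cf_q \<alpha> k | k t. 1 \<le> t \<and> t \<le> cf_a \<alpha> (k + 1)}"

text \<open>The point R^n(rho) = frac(rho + n alpha) on T = [0,1).
  Variant False: I_0 = [0,1-alpha), I_1 = [1-alpha,1).
  Variant True:  I_0 = (0,1-alpha], I_1 = (1-alpha,1] (the point 0 of T is identified with 1).\<close>
definition sturm :: "bool \<Rightarrow> real \<Rightarrow> real \<Rightarrow> nat \<Rightarrow> nat" where
  "sturm upper \<alpha> \<rho> n =
     (let x = frac (\<rho> + real n * \<alpha>) in
      if upper then (if 0 < x \<and> x \<le> 1 - \<alpha> then 0 else 1)
      else (if x < 1 - \<alpha> then 0 else 1))"

definition factors_slope :: "real \<Rightarrow> nat list set" where
  "factors_slope \<alpha> = {w. \<exists>\<rho> upper j. 0 \<le> \<rho> \<and> \<rho> < 1 \<and>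
       w = map (\<lambda>i. sturm upper \<alpha> \<rho> (j + i)) [0..<length w]}"

definition parikh :: "nat list \<Rightarrow> nat \<times> nat" where
  "parikh u = (length (filter (\<lambda>x. x = 0) u), length (filter (\<lambda>x. x = 1) u))"

definition pv_contained :: "nat \<times> nat \<Rightarrow> nat \<times> nat \<Rightarrow> bool" where
  "pv_contained P Q \<longleftrightarrow> fst P \<le> fst Q \<and> snd P \<le> snd Q \<and> P \<noteq> Q"

text \<open>An abelian decomposition w = u_0 u_1 ... u_n (n >= 2) is a list us = [u_0,...,u_n].\<close>
definition abelian_decomp :: "nat list \<Rightarrow> nat list list \<Rightarrow> bool" where
  "abelian_decomp w us \<longleftrightarrow> 3 \<le> length us \<and> concat us = w \<and>
     (\<forall>i. 1 \<le> i \<and> i < length us - 1 \<longrightarrow> parikh (us ! i) = parikh (us ! 1)) \<and>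
     pv_contained (parikh (us ! 0)) (parikh (us ! 1)) \<and>
     pv_contained (parikh (last us)) (parikh (us ! 1))"

definition abelian_period :: "nat list \<Rightarrow> nat \<Rightarrow> bool" where
  "abelian_period w m \<longleftrightarrow> (\<exists>us. abelian_decomp w us \<and> length (us ! 1) = m)"

definition min_abelian_period :: "nat list \<Rightarrow> nat \<Rightarrow> bool" where
  "min_abelian_period w m \<longleftrightarrow> abelian_period w m \<and> (\<forall>m'. abelian_period w m' \<longrightarrow> m \<le> m')"

end

theory Submission
  imports Defs
begin

(* Every factor of slope \<alpha> is a lower mechanical word: its letter n is
   floor (\<theta> + (n + 1) \<alpha>) - floor (\<theta> + n \<alpha>) for a suitable intercept \<theta>.
   With \<delta> = 1 - q_1 \<alpha> we have 0 < \<delta> < \<alpha> and a_2 \<delta> < \<alpha>. A block of length q_1 advances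
   the rotation by 1 - \<delta>, so the fractional part drifts down by \<delta> per block: from a
   start point whose fractional part stays above the accumulated drift, every block of
   length q_1 contains exactly one letter 1, and q_1 < m is an abelian period of w.
   Such a start exists: the T blocks of length m of the given abelian decomposition
   contain equally many letters 1, and since m \<alpha> = a_2 - 1 + \<gamma> with 2 \<alpha> < \<gamma> < 1, the
   rotation either never wraps around within these blocks or wraps within each of them.
   If T is small, some point of the orbit of length q_1 lands in a window that is long
   enough; if T is large, the two wrapping alternatives pin down the start point. *)

section \<open>Parikh vectors and abelian decompositions\<close>

lemma parikh_append:
  "parikh (xs @ ys) = (fst (parikh xs) + fst (parikh ys), snd (parikh xs) + snd (parikh ys))"
  by (simp add: parikh_def)

lemma parikh_concat_same:
  assumes "\<forall>v \<in> set vs. parikh v = P"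
  shows "parikh (concat vs) = (length vs * fst P, length vs * snd P)"
  using assms by (induction vs) (auto simp: parikh_def)

lemma length_eq_parikh_sum:
  "set xs \<subseteq> {0, 1} \<Longrightarrow> length xs = fst (parikh xs) + snd (parikh xs)"
  by (induction xs) (auto simp: parikh_def)

lemma pv_contained_length_less:
  assumes "pv_contained (parikh u) (parikh v)" "set u \<subseteq> {0, 1}" "set v \<subseteq> {0, 1}"
  shows "length u < length v"
  using assms length_eq_parikh_sum[of u] length_eq_parikh_sum[of v]
  unfolding pv_contained_def by (auto simp: prod_eq_iff)

lemma pv_contained_one_one:
  assumes "set u \<subseteq> {0, 1}" "length u < L" "snd (parikh u) \<le> 1"
  shows "pv_contained (parikh u) (L - 1, 1)"
  using assms length_eq_parikh_sum[of u] unfolding pv_contained_def by auto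

lemma abelian_decomp_split:
  assumes "abelian_decomp w us" "set w \<subseteq> {0, 1}"
  obtains u0 vs ul where "w = u0 @ concat vs @ ul" "vs \<noteq> []"
    "\<forall>v \<in> set vs. parikh v = parikh (us ! 1) \<and> length v = length (us ! 1)"
    "length u0 < length (us ! 1)" "length ul < length (us ! 1)"
proof -
  have len: "3 \<le> length us" and cat: "concat us = w"
    and mid: "\<forall>i. 1 \<le> i \<and> i < length us - 1 \<longrightarrow> parikh (us ! i) = parikh (us ! 1)"
    and head: "pv_contained (parikh (us ! 0)) (parikh (us ! 1))"
    and tail: "pv_contained (parikh (last us)) (parikh (us ! 1))"
    using assms(1) unfolding abelian_decomp_def by blast+
  obtain u0 rest where "us = u0 # rest" using len by (cases us) auto
  moreover obtain vs ul where "rest = vs @ [ul]"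
    using len calculation by (cases rest rule: rev_cases) auto
  ultimately have us: "us = u0 # vs @ [ul]" by simp
  have vs: "vs \<noteq> []" "us ! 1 = vs ! 0" using len unfolding us by (auto simp: nth_append)
  have binary: "set u \<subseteq> {0, 1}" if "u \<in> set us" for u
    using that assms(2) unfolding cat[symmetric] by auto
  have bin1: "set (us ! 1) \<subseteq> {0, 1}" using binary len by simp
  have "parikh v = parikh (us ! 1) \<and> length v = length (us ! 1)" if "v \<in> set vs" for v
  proof -
    obtain i where i: "i < length vs" "v = vs ! i" using \<open>v \<in> set vs\<close> by (metis in_set_conv_nth)
    then have "parikh v = parikh (us ! 1)"
      using mid[rule_format, of "Suc i"] unfolding us by (simp add: nth_append)
    moreover have "set v \<subseteq> {0, 1}" using binary that unfolding us by simp
    ultimately show ?thesis using length_eq_parikh_sum[of v] length_eq_parikh_sum[OF bin1] by simp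
  qed
  moreover have "length u0 < length (us ! 1)"
    using pv_contained_length_less[OF head _ bin1] binary[of u0] unfolding us by simp
  moreover have "length ul < length (us ! 1)"
    using pv_contained_length_less[OF tail _ bin1] binary[of ul] unfolding us by simp
  moreover have "w = u0 @ concat vs @ ul" using cat unfolding us by simp
  ultimately show thesis using that vs(1) by blast
qed

lemma concat_take_blocks:
  "concat (map (\<lambda>t. take L (drop (t * L) xs)) [0..<T]) = take (T * L) xs"
proof (induction T)
  case (Suc T)
  have "take (T * L + L) xs = take (T * L) xs @ take L (drop (T * L) xs)"
    by (rule take_add)
  then show ?case using Suc by (simp add: add.commute)
qed simp

lemma abelian_period_of_one_per_block:
  assumes w: "set w \<subseteq> {0, 1}" and s: "s < L" "s + L \<le> length w"
    and blocks: "\<forall>t < (length w - s) div L. snd (parikh (take L (drop (s + t * L) w))) = 1"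
    and head: "snd (parikh (take s w)) \<le> 1"
    and tail: "snd (parikh (drop (s + (length w - s) div L * L) w)) \<le> 1"
  shows "abelian_period w L"
proof -
  define T where "T = (length w - s) div L"
  define blk where "blk t = take L (drop (s + t * L) w)" for t
  define us where "us = take s w # map blk [0..<T] @ [drop (s + T * L) w]"
  have "0 < T" using s unfolding T_def by (simp add: div_greater_zero_iff)
  have "T * L \<le> length w - s" "length w - s - T * L < L"
    using s unfolding T_def by (simp_all add: div_times_less_eq_dividend minus_div_mult_eq_mod)
  then have TL: "s + T * L \<le> length w" "length w - (s + T * L) < L" using s by auto
  have set_sub: "set u \<subseteq> {0, 1}" if "u = take n (drop k w) \<or> u = drop k w" for u n k
    using w that by (auto dest: in_set_takeD in_set_dropD)
  have blk: "parikh (blk t) = (L - 1, 1)" "length (blk t) = L" if "t < T" for t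
  proof -
    have "(t + 1) * L \<le> T * L" using that by (intro mult_le_mono1) simp
    then show len: "length (blk t) = L" using TL unfolding blk_def by auto
    have "snd (parikh (blk t)) = 1" using blocks that unfolding blk_def T_def by simp
    moreover have "set (blk t) \<subseteq> {0, 1}" using set_sub unfolding blk_def by blast
    ultimately show "parikh (blk t) = (L - 1, 1)"
      using length_eq_parikh_sum[of "blk t"] len by (auto simp: prod_eq_iff)
  qed
  have nth_us: "us ! i = blk (i - 1)" if "1 \<le> i" "i \<le> T" for i
    using that unfolding us_def by (cases i) (auto simp: nth_append)
  have "concat us = take s w @ take (T * L) (drop s w) @ drop (s + T * L) w"
    using concat_take_blocks[of L "drop s w" T] unfolding us_def blk_def by (simp add: add.commute)
  also have "\<dots> = w" by (metis append_take_drop_id drop_drop add.commute)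
  finally have "concat us = w" .
  moreover have "pv_contained (parikh (take s w)) (L - 1, 1)"
    using set_sub[of "take s w" s 0] head s by (intro pv_contained_one_one) auto
  moreover have "pv_contained (parikh (drop (s + T * L) w)) (L - 1, 1)"
    using set_sub[of "drop (s + T * L) w"] tail TL unfolding T_def by (intro pv_contained_one_one) auto
  moreover have "parikh (us ! i) = (L - 1, 1)" if "1 \<le> i" "i < length us - 1" for i
    using that blk(1) nth_us by (simp add: us_def)
  moreover have "parikh (us ! 1) = (L - 1, 1)" "length (us ! 1) = L"
    using nth_us[of 1] blk[of 0] \<open>0 < T\<close> by simp_all
  ultimately have "abelian_decomp w us"
    unfolding abelian_decomp_def using \<open>0 < T\<close> by (simp add: us_def)
  then show ?thesis
    unfolding abelian_period_def using \<open>length (us ! 1) = L\<close> by blast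
qed

section \<open>Mechanical words\<close>

definition mech_floor :: "real \<Rightarrow> real \<Rightarrow> nat \<Rightarrow> int" where
  "mech_floor \<alpha> \<theta> n = \<lfloor>\<theta> + real n * \<alpha>\<rfloor>"

definition mech_letter :: "real \<Rightarrow> real \<Rightarrow> nat \<Rightarrow> nat" where
  "mech_letter \<alpha> \<theta> n = nat (mech_floor \<alpha> \<theta> (Suc n) - mech_floor \<alpha> \<theta> n)"

definition mech_word :: "real \<Rightarrow> real \<Rightarrow> nat \<Rightarrow> nat list" where
  "mech_word \<alpha> \<theta> N = map (mech_letter \<alpha> \<theta>) [0..<N]"

lemma mech_floor_mono:
  assumes "0 \<le> \<alpha>" "i \<le> j"
  shows "mech_floor \<alpha> \<theta> i \<le> mech_floor \<alpha> \<theta> j"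
  unfolding mech_floor_def using assms by (intro floor_mono add_left_mono mult_right_mono) auto

lemma mech_floor_diff_le_1:
  assumes "0 \<le> \<alpha>" "i \<le> j" "real (j - i) * \<alpha> < 1"
  shows "mech_floor \<alpha> \<theta> j - mech_floor \<alpha> \<theta> i \<le> 1"
proof -
  let ?z = "\<theta> + real i * \<alpha>"
  have "\<theta> + real j * \<alpha> = ?z + real (j - i) * \<alpha>"
    using assms(2) by (simp add: algebra_simps of_nat_diff)
  also have "\<dots> < of_int (\<lfloor>?z\<rfloor> + 2)"
    using assms(3) real_of_int_floor_add_one_gt[of ?z] by linarith
  finally have "\<lfloor>\<theta> + real j * \<alpha>\<rfloor> < \<lfloor>?z\<rfloor> + 2"
    by (simp only: floor_less_iff)
  then show ?thesis
    unfolding mech_floor_def by simp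
qed

lemma mech_letter_eq:
  assumes "0 \<le> \<alpha>" "\<alpha> < 1"
  shows "int (mech_letter \<alpha> \<theta> n) = mech_floor \<alpha> \<theta> (Suc n) - mech_floor \<alpha> \<theta> n"
    and "mech_letter \<alpha> \<theta> n \<le> 1"
  using mech_floor_mono[OF assms(1), of n "Suc n" \<theta>] mech_floor_diff_le_1[of \<alpha> n "Suc n" \<theta>] assms
  unfolding mech_letter_def by auto

lemma set_mech_word:
  assumes "0 \<le> \<alpha>" "\<alpha> < 1"
  shows "set (mech_word \<alpha> \<theta> N) \<subseteq> {0, 1}"
proof
  fix x assume "x \<in> set (mech_word \<alpha> \<theta> N)"
  then have "x \<le> 1" using mech_letter_eq(2)[OF assms] unfolding mech_word_def by auto
  then show "x \<in> {0, 1}" by auto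
qed

lemma take_drop_mech_word:
  assumes "i \<le> j" "j \<le> N"
  shows "take (j - i) (drop i (mech_word \<alpha> \<theta> N)) = map (mech_letter \<alpha> \<theta>) [i..<j]"
  using assms unfolding mech_word_def by (simp add: drop_map take_map)

lemma ones_mech_segment:
  assumes "0 \<le> \<alpha>" "\<alpha> < 1" "i \<le> j"
  shows "int (snd (parikh (map (mech_letter \<alpha> \<theta>) [i..<j]))) = mech_floor \<alpha> \<theta> j - mech_floor \<alpha> \<theta> i"
  using assms(3)
proof (induction j rule: dec_induct)
  case base
  then show ?case by (simp add: parikh_def)
next
  case (step j)
  then show ?case
    using mech_letter_eq[OF assms(1,2), of \<theta> j] by (auto simp: parikh_append parikh_def le_Suc_eq)
qed

lemma ones_mech_window_le_1:
  assumes "0 \<le> \<alpha>" "\<alpha> < 1" "i \<le> j" "j \<le> N" "real (j - i) * \<alpha> < 1"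
  shows "snd (parikh (take (j - i) (drop i (mech_word \<alpha> \<theta> N)))) \<le> 1"
  using ones_mech_segment[OF assms(1-3), of \<theta>] mech_floor_diff_le_1[OF assms(1,3,5), of \<theta>]
  unfolding take_drop_mech_word[OF assms(3,4)] by linarith

lemma mech_abelian_period_blocks:
  assumes \<alpha>: "0 \<le> \<alpha>" "\<alpha> < 1" and per: "abelian_period (mech_word \<alpha> \<theta> N) m"
  obtains b0 T e c where "N = b0 + T * m + e" "b0 < m" "e < m" "1 \<le> T"
    "mech_floor \<alpha> \<theta> (b0 + T * m) - mech_floor \<alpha> \<theta> b0 = int T * int c"
proof -
  define w where "w = mech_word \<alpha> \<theta> N"
  obtain us where us: "abelian_decomp w us" "length (us ! 1) = m"
    using per unfolding abelian_period_def w_def by blast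
  obtain u0 vs ul where split: "w = u0 @ concat vs @ ul" "vs \<noteq> []"
    "\<forall>v \<in> set vs. parikh v = parikh (us ! 1) \<and> length v = m"
    "length u0 < m" "length ul < m"
    using abelian_decomp_split[OF us(1) set_mech_word[OF \<alpha>, of \<theta> N, folded w_def]] us(2) by metis
  define b0 T e c where "b0 = length u0" and "T = length vs" and "e = length ul"
    and "c = snd (parikh (us ! 1))"
  have blocks: "parikh (concat vs) = (T * fst (parikh (us ! 1)), T * c)"
    using split(3) parikh_concat_same[of vs] unfolding T_def c_def by simp
  have "length (concat vs) = T * m"
    using split(3) unfolding T_def by (induction vs) auto
  then have N: "N = b0 + T * m + e"
    using arg_cong[OF split(1), of length] unfolding w_def mech_word_def b0_def e_def by simp
  have "concat vs = take (b0 + T * m - b0) (drop b0 w)"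
    using split(1) \<open>length (concat vs) = T * m\<close> unfolding b0_def by simp
  also have "\<dots> = map (mech_letter \<alpha> \<theta>) [b0..<b0 + T * m]"
    unfolding w_def by (rule take_drop_mech_word) (use N in simp_all)
  finally have "mech_floor \<alpha> \<theta> (b0 + T * m) - mech_floor \<alpha> \<theta> b0 = int T * int c"
    using ones_mech_segment[OF \<alpha>, of b0 "b0 + T * m" \<theta>] blocks by simp
  moreover have "1 \<le> T" using split(2) unfolding T_def by (simp add: Suc_le_eq)
  ultimately show thesis
    using that N split(4,5) unfolding b0_def e_def by blast
qed

lemma sturm_lower_floor:
  assumes "0 < \<alpha>" "\<alpha> < 1"
  shows "sturm False \<alpha> \<rho> n = nat (\<lfloor>(\<rho> + real n * \<alpha>) + \<alpha>\<rfloor> - \<lfloor>\<rho> + real n * \<alpha>\<rfloor>)"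
proof -
  have "\<lfloor>\<alpha>\<rfloor> = 0" "frac \<alpha> = \<alpha>" using assms by (simp_all add: floor_eq_iff frac_eq)
  then show ?thesis
    unfolding sturm_def Let_def by (simp add: floor_add[of "\<rho> + real n * \<alpha>" \<alpha>])
qed

lemma sturm_upper_ceiling:
  assumes "0 < \<alpha>" "\<alpha> < 1"
  shows "sturm True \<alpha> \<rho> n = nat (\<lceil>(\<rho> + real n * \<alpha>) + \<alpha>\<rceil> - \<lceil>\<rho> + real n * \<alpha>\<rceil>)"
proof -
  define y where "y = \<rho> + real n * \<alpha>"
  define k where "k = \<lfloor>y\<rfloor>"
  have k: "\<lfloor>y\<rfloor> = k" "of_int k \<le> y" "y < of_int k + 1"
    unfolding k_def by linarith+
  have "\<lceil>y\<rceil> = k + (if y = of_int k then 0 else 1)"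
    using k by (subst ceiling_eq_iff) auto
  moreover have "\<lceil>y + \<alpha>\<rceil> = k + (if y - of_int k + \<alpha> \<le> 1 then 1 else 2)"
    using k assms by (subst ceiling_eq_iff) auto
  ultimately show ?thesis
    using k assms unfolding sturm_def Let_def frac_def y_def[symmetric] by auto
qed

lemma ceiling_eq_floor_shift:
  fixes y \<epsilon> :: real
  assumes "0 < \<epsilon>" "\<epsilon> < 1" "y \<in> \<int> \<or> \<epsilon> < frac y"
  shows "\<lceil>y\<rceil> = \<lfloor>y - \<epsilon>\<rfloor> + 1"
proof (cases "y \<in> \<int>")
  case True
  then obtain k where "y = of_int k" by (auto elim: Ints_cases)
  moreover have "\<lfloor>of_int k - \<epsilon>\<rfloor> = k - 1" using assms by (simp add: floor_eq_iff)
  ultimately show ?thesis by simp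
next
  case False
  have y: "y = of_int \<lfloor>y\<rfloor> + frac y" "0 < frac y" "frac y < 1"
    using False frac_lt_1[of y] frac_gt_0_iff[of y] by (simp_all add: frac_def)
  have "\<lfloor>y - \<epsilon>\<rfloor> = \<lfloor>y\<rfloor>"
    using y assms False by (subst floor_eq_iff) linarith
  moreover have "\<lceil>y\<rceil> = \<lfloor>y\<rfloor> + 1"
    using y by (subst ceiling_eq_iff) linarith
  ultimately show ?thesis by simp
qed

lemma finite_pos_lower_bound:
  fixes A :: "real set"
  assumes "finite A" "\<forall>x \<in> A. 0 < x"
  obtains \<epsilon> where "0 < \<epsilon>" "\<epsilon> < 1" "\<forall>x \<in> A. \<epsilon> < x"
proof
  define \<mu> where "\<mu> = Min (insert 1 A)"
  have "0 < \<mu>" "\<mu> \<le> 1" "\<forall>x \<in> A. \<mu> \<le> x"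
    using assms unfolding \<mu>_def by (auto simp: Min_gr_iff)
  then show "0 < \<mu> / 2" "\<mu> / 2 < 1" "\<forall>x \<in> A. \<mu> / 2 < x" by force+
qed

lemma factor_slope_mech_word:
  assumes "0 < \<alpha>" "\<alpha> < 1" "w \<in> factors_slope \<alpha>"
  obtains \<theta> where "w = mech_word \<alpha> \<theta> (length w)"
proof -
  obtain \<rho> upper j where w: "w = map (\<lambda>i. sturm upper \<alpha> \<rho> (j + i)) [0..<length w]"
    using assms(3) unfolding factors_slope_def by blast
  define y where "y i = \<rho> + real (j + i) * \<alpha>" for i
  have y_Suc: "y (Suc i) = y i + \<alpha>" for i unfolding y_def by (simp add: algebra_simps)
  show thesis
  proof (cases upper)
    case False
    have "sturm upper \<alpha> \<rho> (j + i) = mech_letter \<alpha> (y 0) i" for i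
      using False sturm_lower_floor[OF assms(1,2)]
      unfolding mech_letter_def mech_floor_def y_def by (simp add: algebra_simps)
    then show thesis using that w by (simp add: mech_word_def)
  next
    case True
    \<comment> \<open>Lowering the intercept by an \<epsilon> below every nonzero fractional part on the
      window turns the ceilings of the upper word into floors.\<close>
    obtain \<epsilon> where \<epsilon>: "0 < \<epsilon>" "\<epsilon> < 1"
      "\<forall>x \<in> frac ` y ` {..length w} - {0}. \<epsilon> < x"
      by (rule finite_pos_lower_bound[of "frac ` y ` {..length w} - {0}"])
        (use frac_ge_0 in \<open>auto simp: less_le\<close>)
    have ceil_y: "\<lceil>y i\<rceil> = mech_floor \<alpha> (y 0 - \<epsilon>) i + 1" if "i \<le> length w" for i
    proof -
      have "y i \<in> \<int> \<or> \<epsilon> < frac (y i)" using \<epsilon>(3) that by auto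
      then have "\<lceil>y i\<rceil> = \<lfloor>y i - \<epsilon>\<rfloor> + 1" using ceiling_eq_floor_shift \<epsilon> by blast
      then show ?thesis unfolding mech_floor_def y_def by (simp add: algebra_simps)
    qed
    have "sturm upper \<alpha> \<rho> (j + i) = mech_letter \<alpha> (y 0 - \<epsilon>) i" if "i < length w" for i
    proof -
      have "sturm upper \<alpha> \<rho> (j + i) = nat (\<lceil>y (Suc i)\<rceil> - \<lceil>y i\<rceil>)"
        using True sturm_upper_ceiling[OF assms(1,2), of \<rho> "j + i"] unfolding y_Suc by (simp add: y_def)
      then show ?thesis
        using ceil_y[of i] ceil_y[of "Suc i"] that unfolding mech_letter_def by simp
    qed
    then have "w = mech_word \<alpha> (y 0 - \<epsilon>) (length w)"
      unfolding mech_word_def by (subst w) (auto intro!: map_cong)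
    then show thesis by (rule that)
  qed
qed

section \<open>Blocks containing a single letter 1\<close>

lemma mech_floor_progression:
  assumes "real L * \<alpha> = 1 - \<delta>" "0 \<le> \<delta>" "real t * \<delta> \<le> frac (\<theta> + real s * \<alpha>)"
  shows "mech_floor \<alpha> \<theta> (s + t * L) = \<lfloor>\<theta> + real s * \<alpha>\<rfloor> + int t"
proof -
  define y where "y = frac (\<theta> + real s * \<alpha>)"
  have "\<theta> + real (s + t * L) * \<alpha> = \<theta> + real s * \<alpha> + real t * (real L * \<alpha>)"
    by (simp add: algebra_simps)
  also have "\<dots> = of_int (\<lfloor>\<theta> + real s * \<alpha>\<rfloor> + int t) + (y - real t * \<delta>)"
    unfolding assms(1) y_def frac_def by (simp add: algebra_simps)
  finally have "\<theta> + real (s + t * L) * \<alpha> = \<dots>" .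
  moreover have "0 \<le> real t * \<delta>" using assms(2) by simp
  then have "0 \<le> y - real t * \<delta>" "y - real t * \<delta> < 1"
    using assms(3) frac_lt_1[of "\<theta> + real s * \<alpha>"] unfolding y_def by linarith+
  ultimately show ?thesis
    unfolding mech_floor_def by (simp add: floor_eq_iff)
qed

lemma mech_floor_block_step:
  assumes "real L * \<alpha> = 1 - \<delta>" "0 \<le> \<delta>" "real (t + 1) * \<delta> \<le> frac (\<theta> + real s * \<alpha>)"
  shows "mech_floor \<alpha> \<theta> (s + (t + 1) * L) - mech_floor \<alpha> \<theta> (s + t * L) = 1"
proof -
  have "real t * \<delta> \<le> real (t + 1) * \<delta>" using assms(2) by (simp add: mult_right_mono)
  then show ?thesis
    using mech_floor_progression[OF assms(1,2), of t] mech_floor_progression[OF assms] assms(3)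
    by simp
qed

lemma mech_abelian_period_of_drift:
  assumes \<alpha>: "0 \<le> \<alpha>" "\<alpha> < 1" and L: "real L * \<alpha> = 1 - \<delta>" "0 < \<delta>"
    and s: "s < L" "s + L \<le> N"
    and drift: "real ((N - s) div L) * \<delta> \<le> frac (\<theta> + real s * \<alpha>)"
  shows "abelian_period (mech_word \<alpha> \<theta> N) L"
proof -
  define w where "w = mech_word \<alpha> \<theta> N"
  define T where "T = (N - s) div L"
  have len: "length w = N" unfolding w_def mech_word_def by simp
  have window: "real n * \<alpha> < 1" if "n < L" for n
  proof -
    have "real n * \<alpha> \<le> real L * \<alpha>" using that \<alpha> by (intro mult_right_mono) auto
    then show ?thesis using L by linarith
  qed
  have "snd (parikh (take L (drop (s + t * L) w))) = 1" if "t < T" for t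
  proof -
    have "(t + 1) * L \<le> T * L" using that by (intro mult_le_mono1) simp
    moreover have "T * L \<le> N - s" unfolding T_def by (rule div_times_less_eq_dividend)
    ultimately have le: "s + t * L \<le> s + (t + 1) * L" "s + (t + 1) * L \<le> N" using s by simp_all
    have "real (t + 1) * \<delta> \<le> real T * \<delta>" using that L(2) by (simp add: mult_right_mono)
    then have "mech_floor \<alpha> \<theta> (s + (t + 1) * L) - mech_floor \<alpha> \<theta> (s + t * L) = 1"
      using drift unfolding T_def by (intro mech_floor_block_step[OF L(1) less_imp_le[OF L(2)]]) simp
    then show ?thesis
      using ones_mech_segment[OF \<alpha> le(1), of \<theta>] take_drop_mech_word[OF le, of \<alpha> \<theta>]
      unfolding w_def by simp
  qed
  moreover have "snd (parikh (take s w)) \<le> 1"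
    using ones_mech_window_le_1[OF \<alpha>, of 0 s N \<theta>] window s unfolding w_def by simp
  moreover have "snd (parikh (drop (s + T * L) w)) \<le> 1"
  proof -
    have "T * L \<le> N - s" "N - s - T * L < L"
      using s unfolding T_def by (simp_all add: div_times_less_eq_dividend minus_div_mult_eq_mod)
    then have i: "s + T * L \<le> N" "N - (s + T * L) < L" using s by auto
    have "snd (parikh (take (N - (s + T * L)) (drop (s + T * L) w))) \<le> 1"
      unfolding w_def by (rule ones_mech_window_le_1[OF \<alpha> i(1) order_refl window[OF i(2)]])
    then show ?thesis using len by simp
  qed
  ultimately show ?thesis
    using abelian_period_of_one_per_block[of w s L] set_mech_word[OF \<alpha>] s len
    unfolding w_def T_def by simp
qed

lemma mech_abelian_period_from_point:
  assumes \<alpha>: "0 \<le> \<alpha>" "\<alpha> < 1" and L: "0 < L" "real L * \<alpha> = 1 - \<delta>" "0 < \<delta>"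
    and p: "p \<le> N" "p mod L + L \<le> N"
    and below: "frac (\<theta> + real p * \<alpha>) + real (p div L) * \<delta> < 1"
    and above: "real ((N - p) div L) * \<delta> \<le> frac (\<theta> + real p * \<alpha>)"
  shows "abelian_period (mech_word \<alpha> \<theta> N) L"
proof -
  define s K where "s = p mod L" and "K = p div L"
  have p_eq: "p = s + K * L" unfolding s_def K_def by simp
  have "\<theta> + real s * \<alpha> = (\<theta> + real p * \<alpha>) - real K * (real L * \<alpha>)"
    unfolding p_eq by (simp add: algebra_simps)
  also have "\<dots> = (\<theta> + real p * \<alpha>) - real K + real K * \<delta>"
    unfolding L(2) by (simp add: algebra_simps)
  finally have "frac (\<theta> + real s * \<alpha>) = frac (\<theta> + real p * \<alpha>) + real K * \<delta>"
    using below L(3) unfolding K_def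
    by (subst frac_unique_iff) (simp add: frac_def)
  moreover have "N - s = (N - p) + K * L" using p(1) unfolding p_eq by simp
  then have "(N - s) div L = (N - p) div L + K" using L(1) by simp
  ultimately have "real ((N - s) div L) * \<delta> \<le> frac (\<theta> + real s * \<alpha>)"
    using above by (simp add: algebra_simps)
  then show ?thesis
    by (rule mech_abelian_period_of_drift[OF \<alpha> L(2,3), rotated 2]) (use p(2) L(1) in \<open>auto simp: s_def\<close>)
qed

lemma mech_abelian_period_short:
  assumes \<alpha>: "0 < \<alpha>" "\<alpha> < 1" and L: "2 \<le> L" "real L * \<alpha> = 1 - \<delta>" "0 < \<delta>" "\<delta> < \<alpha>"
    and N: "L < N" "N < 2 * L"
  shows "abelian_period (mech_word \<alpha> \<theta> N) L"
proof (cases "\<delta> \<le> frac \<theta>")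
  case True
  have "N div L = 1" using N by (intro div_nat_eqI) auto
  then show ?thesis
    using True frac_lt_1[of \<theta>] L N \<alpha>
    by (intro mech_abelian_period_from_point[of \<alpha> L \<delta> 0]) auto
next
  case False
  have "2 * \<alpha> \<le> real L * \<alpha>" using L \<alpha> by (intro mult_right_mono) auto
  then have below: "frac \<theta> + \<alpha> < 1" using False L by linarith
  then have "frac (\<theta> + real 1 * \<alpha>) = frac \<theta> + \<alpha>"
    using \<alpha> by (subst frac_unique_iff) (simp add: frac_def)
  moreover have "(N - 1) div L = 1" "1 div L = 0" "1 mod L = 1"
    using N L by (auto intro: div_nat_eqI)
  moreover have "\<delta> \<le> frac \<theta> + \<alpha>" using L(4) frac_ge_0[of \<theta>] by linarith
  ultimately show ?thesis
    using below L N \<alpha>(1,2)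
    by (intro mech_abelian_period_from_point[of \<alpha> L \<delta> 1]) simp_all
qed

lemma orbit_first_hit:
  fixes \<xi> t \<alpha> :: real
  assumes "0 < \<alpha>" "\<xi> < t"
  obtains u :: nat where "t \<le> \<xi> + real u * \<alpha>" "\<xi> + real u * \<alpha> < t + \<alpha>"
proof
  define v where "v = (t - \<xi>) / \<alpha>"
  define n where "n = nat \<lceil>v\<rceil>"
  have v: "0 < v" "v * \<alpha> = t - \<xi>" unfolding v_def using assms by simp_all
  then have "v \<le> real n" "real n < v + 1" unfolding n_def by linarith+
  then have "v * \<alpha> \<le> real n * \<alpha>" "real n * \<alpha> < (v + 1) * \<alpha>"
    using assms(1) by (simp_all add: mult_right_mono)
  then show "t \<le> \<xi> + real n * \<alpha>" "\<xi> + real n * \<alpha> < t + \<alpha>"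
    using v by (simp_all add: algebra_simps)
qed

lemma rotation_orbit_hits_interval:
  fixes \<xi> A B \<alpha> \<delta> :: real
  assumes \<xi>: "0 \<le> \<xi>" "\<xi> < 1" and AB: "0 \<le> A" "B \<le> 1" "\<alpha> + \<delta> \<le> B - A"
    and \<alpha>: "0 < \<alpha>" "real L * \<alpha> = 1 - \<delta>" "0 \<le> \<delta>"
  obtains u where "u < L" "A \<le> frac (\<xi> + real u * \<alpha>)" "frac (\<xi> + real u * \<alpha>) < B"
proof -
  have u_less: "u < L" if "real u * \<alpha> < real L * \<alpha>" for u
    using that \<alpha>(1) by simp
  consider "\<xi> < A" | "A \<le> \<xi>" "\<xi> < B" | "B \<le> \<xi>" by linarith
  then show thesis
  proof cases
    case 1
    obtain u where u: "A \<le> \<xi> + real u * \<alpha>" "\<xi> + real u * \<alpha> < A + \<alpha>"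
      using orbit_first_hit[OF \<alpha>(1) 1] .
    moreover have "frac (\<xi> + real u * \<alpha>) = \<xi> + real u * \<alpha>"
      using u AB \<alpha> by (simp add: frac_eq)
    moreover have "u < L" using u u_less AB \<xi> \<alpha> by simp
    ultimately show thesis using AB \<alpha>(3) by (intro that[of u]) linarith+
  next
    case 2
    have "0 < real L * \<alpha>" using AB \<alpha> by linarith
    then have "0 < L" by (simp add: zero_less_mult_iff)
    then show thesis using that[of 0] 2 \<xi> by (simp add: frac_eq)
  next
    case 3
    then obtain u where u: "1 + A \<le> \<xi> + real u * \<alpha>" "\<xi> + real u * \<alpha> < 1 + A + \<alpha>"
      using orbit_first_hit[OF \<alpha>(1), of \<xi> "1 + A"] \<xi> AB by auto
    moreover have "frac (\<xi> + real u * \<alpha>) = \<xi> + real u * \<alpha> - 1"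
      using u AB \<alpha> by (subst frac_unique_iff) simp
    moreover have "u < L" using u u_less AB 3 \<alpha> by simp
    ultimately show thesis using AB \<alpha>(3) by (intro that[of u]) linarith+
  qed
qed

lemma floor_eq_int_mult_cases:
  fixes x :: real
  assumes "\<lfloor>x\<rfloor> = int T * k"
  shows "x < 1 \<or> real T \<le> x"
proof (cases "k \<le> 0")
  case True
  then have "\<lfloor>x\<rfloor> \<le> 0" using assms by (simp add: mult_nonneg_nonpos)
  then show ?thesis by (simp add: floor_le_iff)
next
  case False
  then have "int T * 1 \<le> int T * k" by (intro mult_left_mono) auto
  then have "int T \<le> \<lfloor>x\<rfloor>" using assms by simp
  then show ?thesis by (simp add: le_floor_iff)
qed

lemma real_div_le_of_less_mult:
  assumes "x < k * d"
  shows "real (x div d) \<le> real k - 1"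
proof -
  have "x div d < k" using assms by (rule less_mult_imp_div_less)
  then show ?thesis by linarith
qed

section \<open>Blocks of length m\<close>

text \<open>The abelian decomposition of the mechanical word of length N with period m
  consists of a head of length b0, T full blocks of length m and a tail of length e;
  a1 and a2 are the partial quotients a_1 = q_1 and a_2, and \<delta> = 1 - q_1 \<alpha>.\<close>

locale m_block_setting =
  fixes \<alpha> \<theta> \<delta> :: real and a1 a2 r m b0 T e N :: nat
  assumes \<alpha>: "0 < \<alpha>" "\<alpha> < 1"
    and a1: "4 \<le> a1" "real a1 * \<alpha> = 1 - \<delta>" "0 < \<delta>" "\<delta> < \<alpha>"
    and a2: "2 \<le> a2" "real a2 * \<delta> < \<alpha>"
    and m: "m = (a2 - 1) * a1 + r" "3 \<le> r" "r < a1"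
    and N: "N = b0 + T * m + e" "b0 < m" "e < m" "1 \<le> T"
begin

lemma m_bounds: "a1 + 3 \<le> m" "m < a2 * a1" "b0 + m \<le> N"
proof -
  have "1 * a1 \<le> (a2 - 1) * a1" using a2(1) by (intro mult_le_mono1) simp
  then show "a1 + 3 \<le> m" using m by linarith
  have "a2 * a1 = (a2 - 1) * a1 + a1" using a2(1) by (cases a2) auto
  then show "m < a2 * a1" using m by simp
  show "b0 + m \<le> N" using N by (cases T) auto
qed

text \<open>\<xi> is the rotation point at the start of the first block; by m_times_\<alpha>
  each block of length m moves it by \<gamma> modulo 1.\<close>

definition \<xi> :: real where "\<xi> = frac (\<theta> + real b0 * \<alpha>)"

definition \<gamma> :: real where "\<gamma> = real r * \<alpha> - real (a2 - 1) * \<delta>"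

lemma m_times_\<alpha>: "real m * \<alpha> = real (a2 - 1) + \<gamma>"
proof -
  have "real m = real (a2 - 1) * real a1 + real r"
    unfolding m(1) by (simp only: of_nat_add of_nat_mult)
  then have "real m * \<alpha> = real (a2 - 1) * (real a1 * \<alpha>) + real r * \<alpha>"
    by (simp add: algebra_simps)
  then show ?thesis unfolding a1(2) \<gamma>_def by (simp add: algebra_simps)
qed

lemma \<gamma>_bounds: "2 * \<alpha> < \<gamma>" "(2 * real a2 - 1) * \<delta> < \<gamma>" "\<gamma> \<le> 1 - \<alpha> - real a2 * \<delta>"
proof -
  have "real (a2 - 1) * \<delta> = real a2 * \<delta> - \<delta>" using a2(1) by (simp add: of_nat_diff algebra_simps)
  moreover have "3 * \<alpha> \<le> real r * \<alpha>" "real r * \<alpha> \<le> (real a1 - 1) * \<alpha>"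
    using m(2,3) \<alpha> by (simp_all add: mult_right_mono)
  moreover have "(real a1 - 1) * \<alpha> = real a1 * \<alpha> - \<alpha>"
    "(2 * real a2 - 1) * \<delta> = 2 * (real a2 * \<delta>) - \<delta>" by (simp_all add: algebra_simps)
  ultimately show "2 * \<alpha> < \<gamma>" "(2 * real a2 - 1) * \<delta> < \<gamma>" "\<gamma> \<le> 1 - \<alpha> - real a2 * \<delta>"
    unfolding \<gamma>_def using a1 a2 by linarith+
qed

lemma frac_from_b0: "frac (\<theta> + real (b0 + u) * \<alpha>) = frac (\<xi> + real u * \<alpha>)"
proof -
  have "\<theta> + real (b0 + u) * \<alpha> = (\<theta> + real b0 * \<alpha>) + real u * \<alpha>" by (simp add: algebra_simps)
  then show ?thesis unfolding \<xi>_def by (simp only: frac_add_simps)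
qed

lemma period_a1_from_offset:
  assumes "b0 + u \<le> N" "2 * a1 \<le> N + 1"
    and "frac (\<xi> + real u * \<alpha>) + real ((b0 + u) div a1) * \<delta> < 1"
    and "real ((N - (b0 + u)) div a1) * \<delta> \<le> frac (\<xi> + real u * \<alpha>)"
  shows "abelian_period (mech_word \<alpha> \<theta> N) a1"
proof -
  have "(b0 + u) mod a1 < a1" using a1(1) by simp
  then have "(b0 + u) mod a1 + a1 \<le> N" using assms(2) by linarith
  then show ?thesis
    using assms \<alpha> a1 unfolding frac_from_b0[symmetric]
    by (intro mech_abelian_period_from_point[of \<alpha> a1 \<delta> "b0 + u"]) auto
qed

lemma few_blocks_case:
  assumes long: "2 * a1 \<le> N + 1" and few: "T + 3 \<le> a1"
  shows "abelian_period (mech_word \<alpha> \<theta> N) a1"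
proof -
  \<comment> \<open>A start point in [A, B) tolerates the drift over the at most a2 blocks before it
    and the at most (T + 1) a2 - 1 blocks after it.\<close>
  define A where "A = (real (T + 1) * real a2 - 1) * \<delta>"
  define B where "B = 1 - real a2 * \<delta>"
  have "1 \<le> (T + 1) * a2" using a2(1) by simp
  then have "1 \<le> real (T + 1) * real a2" by (metis of_nat_1 of_nat_le_iff of_nat_mult)
  then have "0 \<le> A" unfolding A_def using a1(3) by simp
  have "real (T + 2) * (real a2 * \<delta>) \<le> real (T + 2) * \<alpha>"
    using a2 by (intro mult_left_mono) auto
  also have "\<dots> \<le> (real a1 - 1) * \<alpha>" using few \<alpha> by (intro mult_right_mono) auto
  finally have "\<alpha> + \<delta> \<le> B - A" unfolding A_def B_def using a1(2,3) by (simp add: algebra_simps)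
  then obtain u where u: "u < a1" "A \<le> frac (\<xi> + real u * \<alpha>)" "frac (\<xi> + real u * \<alpha>) < B"
    using rotation_orbit_hits_interval[of \<xi> A B \<alpha> \<delta> a1] \<open>0 \<le> A\<close> \<alpha> a1 a2 frac_lt_1
    unfolding B_def \<xi>_def by auto
  have "b0 + u < (a2 + 1) * a1" using u N(2) m_bounds(2) by (simp add: algebra_simps)
  from real_div_le_of_less_mult[OF this]
  have "real ((b0 + u) div a1) * \<delta> \<le> real a2 * \<delta>"
    using a1(3) by (simp add: mult_right_mono)
  moreover have "N - (b0 + u) < (T + 1) * a2 * a1"
  proof -
    have "N - (b0 + u) < (T + 1) * m" using N by simp
    also have "\<dots> \<le> (T + 1) * (a2 * a1)" using m_bounds(2) by (intro mult_le_mono2) simp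
    finally show ?thesis by (simp add: algebra_simps)
  qed
  from real_div_le_of_less_mult[OF this]
  have "real ((N - (b0 + u)) div a1) \<le> real (T + 1) * real a2 - 1" by (simp add: algebra_simps)
  then have "real ((N - (b0 + u)) div a1) * \<delta> \<le> A"
    unfolding A_def by (rule mult_right_mono) (use a1(3) in simp)
  moreover have "b0 + u \<le> N" using u m_bounds by linarith
  ultimately show ?thesis
    using u long unfolding B_def
    by (intro period_a1_from_offset[of u]) linarith+
qed

lemma never_wraps_case:
  assumes many: "a1 \<le> T + 2" and low: "\<xi> + real T * \<gamma> < 1"
  shows "abelian_period (mech_word \<alpha> \<theta> N) a1"
proof -
  have "T = 2"
  proof (rule ccontr)
    assume "T \<noteq> 2"
    then have "real a1 + 1 \<le> 2 * real T" using many a1(1) by linarith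
    then have "(real a1 + 1) * \<alpha> \<le> real T * (2 * \<alpha>)" using \<alpha> by (simp add: mult_right_mono)
    also have "\<dots> \<le> real T * \<gamma>" using \<gamma>_bounds(1) by (simp add: mult_left_mono)
    finally have "real a1 * \<alpha> + \<alpha> \<le> real T * \<gamma>" by (simp add: algebra_simps)
    then show False using low a1 \<xi>_def frac_ge_0[of "\<theta> + real b0 * \<alpha>"] by linarith
  qed
  then have low2: "\<xi> + 2 * \<gamma> < 1" using low by simp
  have "frac (\<xi> + real m * \<alpha>) = \<xi> + \<gamma>"
    unfolding m_times_\<alpha> using low2 \<gamma>_bounds(1) \<alpha> \<xi>_def
    by (subst frac_unique_iff) (simp add: of_nat_diff)
  moreover have "b0 + m < 2 * a2 * a1" "N - (b0 + m) < 2 * a2 * a1"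
    using N m_bounds(2) \<open>T = 2\<close> by simp_all
  then have "real ((b0 + m) div a1) * \<delta> \<le> (2 * real a2 - 1) * \<delta>"
    "real ((N - (b0 + m)) div a1) * \<delta> \<le> (2 * real a2 - 1) * \<delta>"
    using real_div_le_of_less_mult[of _ "2 * a2" a1] a1(3) by (simp_all add: mult_right_mono)
  moreover have "b0 + m \<le> N" "2 * a1 \<le> N + 1" using m_bounds N \<open>T = 2\<close> by simp_all
  ultimately show ?thesis
    using low2 \<gamma>_bounds(2) \<xi>_def frac_ge_0[of "\<theta> + real b0 * \<alpha>"]
    by (intro period_a1_from_offset[of m]) linarith+
qed

lemma frac_last_orbit_point:
  assumes "\<alpha> + \<delta> \<le> \<xi>"
  shows "frac (\<xi> + real (a1 - 1) * \<alpha>) = \<xi> - \<alpha> - \<delta>"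
proof -
  have "real (a1 - 1) * \<alpha> = 1 - \<delta> - \<alpha>"
    using a1 by (simp add: of_nat_diff algebra_simps)
  then have "\<xi> + real (a1 - 1) * \<alpha> = (\<xi> - \<alpha> - \<delta>) + 1"
    "0 \<le> \<xi> - \<alpha> - \<delta>" "\<xi> - \<alpha> - \<delta> < 1"
    using assms \<xi>_def frac_lt_1[of "\<theta> + real b0 * \<alpha>"] \<alpha>(1) a1(3) by linarith+
  then show ?thesis by (simp only: frac_1_eq frac_eq)
qed

lemma always_wraps_case:
  assumes many: "a1 \<le> T + 2" and high: "real T * (1 - \<gamma>) \<le> \<xi>"
  shows "abelian_period (mech_word \<alpha> \<theta> N) a1"
proof -
  have T2: "2 \<le> T" using many a1(1) by simp
  have "real T * (\<alpha> + real a2 * \<delta>) \<le> real T * (1 - \<gamma>)"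
    using \<gamma>_bounds(3) by (intro mult_left_mono) auto
  then have \<xi>_ge: "real T * \<alpha> + real T * (real a2 * \<delta>) \<le> \<xi>"
    using high by (simp add: algebra_simps)
  have "2 * \<alpha> \<le> real T * \<alpha>" using T2 \<alpha> by (simp add: mult_right_mono)
  moreover have "0 \<le> real T * (real a2 * \<delta>)" using a1(3) by simp
  ultimately have "\<alpha> + \<delta> \<le> \<xi>" using \<xi>_ge a1(4) by linarith
  then have frac_shifted: "frac (\<xi> + real (a1 - 1) * \<alpha>) = \<xi> - \<alpha> - \<delta>"
    by (rule frac_last_orbit_point)
  have "b0 + (a1 - 1) < (a2 + 1) * a1" using N(2) m_bounds(2) by (simp add: algebra_simps)
  from real_div_le_of_less_mult[OF this]
  have "real ((b0 + (a1 - 1)) div a1) * \<delta> \<le> real a2 * \<delta>"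
    using a1(3) by (simp add: mult_right_mono)
  moreover have "N - (b0 + (a1 - 1)) + a1 < (T + 1) * a2 * a1"
  proof -
    have "m \<le> T * m" using N(4) by simp
    then have "N - (b0 + (a1 - 1)) + a1 \<le> (T + 1) * m" using N m_bounds(1) by simp
    also have "\<dots> < (T + 1) * (a2 * a1)" using m_bounds(2) by (intro mult_strict_left_mono) simp_all
    finally show ?thesis by (simp add: algebra_simps)
  qed
  from real_div_le_of_less_mult[OF this]
  have "real ((N - (b0 + (a1 - 1))) div a1) \<le> real (T + 1) * real a2 - 2"
    using a1(1) by (simp add: algebra_simps)
  then have "real ((N - (b0 + (a1 - 1))) div a1) * \<delta> \<le> (real (T + 1) * real a2 - 2) * \<delta>"
    using a1(3) by (simp add: mult_right_mono)
  moreover have "(real (T + 1) * real a2 - 2) * \<delta> \<le> \<xi> - \<alpha> - \<delta>"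
    using \<xi>_ge \<open>2 * \<alpha> \<le> real T * \<alpha>\<close> a2(2) a1(3) by (simp add: algebra_simps)
  moreover have "2 * m \<le> T * m" using T2 by (intro mult_le_mono1)
  then have "2 * a1 \<le> N + 1" using m_bounds N by linarith
  moreover have "b0 + (a1 - 1) \<le> N" using m_bounds N by simp
  ultimately show ?thesis
    using frac_shifted a1(3) a2(2) \<xi>_def frac_lt_1[of "\<theta> + real b0 * \<alpha>"]
    by (intro period_a1_from_offset[of "a1 - 1"]) linarith+
qed

lemma wraps_never_or_always:
  assumes "mech_floor \<alpha> \<theta> (b0 + T * m) - mech_floor \<alpha> \<theta> b0 = int T * c"
  shows "\<xi> + real T * \<gamma> < 1 \<or> real T * (1 - \<gamma>) \<le> \<xi>"
proof -
  \<comment> \<open>The T blocks contain T c letters 1, so beyond the T (a2 - 1) forced crossings the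
    rotation crosses an integer a multiple of T times; as 0 < \<gamma> < 1 this is 0 or T.\<close>
  have "\<theta> + real (b0 + T * m) * \<alpha> = (\<theta> + real b0 * \<alpha>) + real T * (real m * \<alpha>)"
    by (simp add: algebra_simps)
  also have "\<dots> = (\<xi> + real T * \<gamma>) + of_int (\<lfloor>\<theta> + real b0 * \<alpha>\<rfloor> + int T * int (a2 - 1))"
    unfolding m_times_\<alpha> \<xi>_def frac_def by (simp add: algebra_simps)
  finally have "mech_floor \<alpha> \<theta> (b0 + T * m)
      = \<lfloor>\<xi> + real T * \<gamma>\<rfloor> + (mech_floor \<alpha> \<theta> b0 + int T * int (a2 - 1))"
    unfolding mech_floor_def by (simp only: floor_add_int)
  then have "\<lfloor>\<xi> + real T * \<gamma>\<rfloor> = int T * (c - int (a2 - 1))"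
    using assms by (simp add: algebra_simps)
  then have "\<xi> + real T * \<gamma> < 1 \<or> real T \<le> \<xi> + real T * \<gamma>"
    by (rule floor_eq_int_mult_cases)
  then show ?thesis by (auto simp: right_diff_distrib)
qed

lemma abelian_period_a1:
  assumes "mech_floor \<alpha> \<theta> (b0 + T * m) - mech_floor \<alpha> \<theta> b0 = int T * c"
  shows "abelian_period (mech_word \<alpha> \<theta> N) a1"
proof (cases "T + 3 \<le> a1")
  case True
  show ?thesis
  proof (cases "N + 2 \<le> 2 * a1")
    case True
    then show ?thesis
      using m_bounds \<alpha> a1 by (intro mech_abelian_period_short[of \<alpha> a1 \<delta>]) auto
  next
    case False
    then show ?thesis using few_blocks_case \<open>T + 3 \<le> a1\<close> by simp
  qed
next
  case False
  then show ?thesis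
    using wraps_never_or_always[OF assms] never_wraps_case always_wraps_case by auto
qed

end

section \<open>The first partial quotients\<close>

lemma first_quotient_mem_M_set:
  assumes "1 \<le> t" "t \<le> cf_a \<alpha> 1"
  shows "t \<in> M_set \<alpha>"
  unfolding M_set_def using assms by (intro CollectI exI[of _ 0] exI[of _ t]) simp

lemma first_partial_quotients:
  assumes "0 < \<alpha>" "\<alpha> < 1" "\<alpha> \<notin> \<rat>"
  defines "\<delta> \<equiv> 1 - real (cf_a \<alpha> 1) * \<alpha>"
  shows "0 < \<delta>" "\<delta> < \<alpha>" "real (cf_a \<alpha> 2) * \<delta> < \<alpha>"
proof -
  define a1 a2 where "a1 = cf_a \<alpha> 1" and "a2 = cf_a \<alpha> 2"
  have "1 / \<alpha> \<notin> \<rat>" using assms(3) Rats_inverse[of "1 / \<alpha>"] by auto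
  have a1: "real a1 = of_int \<lfloor>1 / \<alpha>\<rfloor>" using assms(1) unfolding a1_def cf_a_def by simp
  then have "real a1 \<noteq> 1 / \<alpha>" using \<open>1 / \<alpha> \<notin> \<rat>\<close> by (metis Rats_of_int)
  then have "real a1 < 1 / \<alpha>" "1 / \<alpha> < real a1 + 1" unfolding a1 by linarith+
  then show "0 < \<delta>" "\<delta> < \<alpha>"
    using assms(1) unfolding \<delta>_def a1_def by (simp_all add: field_simps)
  have "frac (1 / \<alpha>) = \<delta> / \<alpha>"
    using assms(1) unfolding frac_def a1[unfolded a1_def, symmetric] \<delta>_def by (simp add: field_simps)
  then have "real a2 = of_int \<lfloor>\<alpha> / \<delta>\<rfloor>"
    using assms(1) \<open>0 < \<delta>\<close> unfolding a2_def cf_a_def by (simp add: numeral_2_eq_2)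
  then have "real a2 \<le> \<alpha> / \<delta>" by simp
  then have "real a2 * \<delta> \<le> \<alpha>" using \<open>0 < \<delta>\<close> by (simp add: pos_le_divide_eq)
  moreover have "real a2 * \<delta> \<noteq> \<alpha>"
  proof
    assume "real a2 * \<delta> = \<alpha>"
    then have "\<alpha> * (1 + real a2 * real a1) = real a2"
      unfolding \<delta>_def a1_def by (simp add: algebra_simps)
    moreover have "0 < 1 + real a2 * real a1" by (simp add: add_pos_nonneg)
    ultimately have "\<alpha> = real a2 / (1 + real a2 * real a1)" by (simp add: eq_divide_eq)
    then show False using assms(3) by (metis Rats_divide Rats_of_nat Rats_add Rats_mult Rats_1)
  qed
  ultimately show "real (cf_a \<alpha> 2) * \<delta> < \<alpha>" unfolding a2_def by simp
qed

lemma between_consecutive_multiples: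
  fixes a1 a2 m :: nat
  assumes "a1 < m" "(a2 - 1) * a1 + 2 < m" "m < a2 * a1"
  obtains r where "2 \<le> a2" "m = (a2 - 1) * a1 + r" "3 \<le> r" "r < a1"
proof
  have "1 * a1 < a2 * a1" using assms(1,3) by linarith
  then show "2 \<le> a2" by (auto simp: mult_less_cancel2)
  then have "a2 * a1 = (a2 - 1) * a1 + a1" by (cases a2) auto
  then show "m = (a2 - 1) * a1 + (m - (a2 - 1) * a1)" "3 \<le> m - (a2 - 1) * a1"
    "m - (a2 - 1) * a1 < a1"
    using assms(2,3) by linarith+
qed

theorem lemma5p4:
  fixes \<alpha> :: real and w :: "nat list" and m :: nat
  assumes "0 < \<alpha>" and "\<alpha> < 1" and "\<alpha> \<notin> \<rat>"
    and "cf_a \<alpha> 1 \<ge> 2"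
    and "w \<in> factors_slope \<alpha>"
    and "abelian_period w m"
    and "m \<notin> Q_set \<alpha> \<union> M_set \<alpha>"
    and "cf_a \<alpha> 1 \<ge> 4"
    and "(cf_a \<alpha> 2 - 1) * cf_q \<alpha> 1 + 2 < m" and "m < cf_a \<alpha> 2 * cf_q \<alpha> 1"
  shows "\<not> min_abelian_period w m"
proof -
  define a1 a2 \<delta> where "a1 = cf_a \<alpha> 1" and "a2 = cf_a \<alpha> 2" and "\<delta> = 1 - real a1 * \<alpha>"
  have cf: "real a1 * \<alpha> = 1 - \<delta>" "0 < \<delta>" "\<delta> < \<alpha>" "real a2 * \<delta> < \<alpha>"
    using first_partial_quotients[OF assms(1-3)] unfolding a1_def a2_def \<delta>_def by auto
  \<comment> \<open>The hypothesis a_1 \<ge> 2 is subsumed by a_1 \<ge> 4.\<close>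
  have "a1 < m"
    using first_quotient_mem_M_set[of m \<alpha>] assms(7,9) unfolding a1_def by force
  moreover have "(a2 - 1) * a1 + 2 < m" "m < a2 * a1"
    using assms(9,10) unfolding a1_def a2_def by simp_all
  ultimately obtain r where r: "2 \<le> a2" "m = (a2 - 1) * a1 + r" "3 \<le> r" "r < a1"
    by (rule between_consecutive_multiples)
  obtain \<theta> where w: "w = mech_word \<alpha> \<theta> (length w)"
    using factor_slope_mech_word[OF assms(1,2,5)] .
  have "abelian_period (mech_word \<alpha> \<theta> (length w)) m" using assms(6) by (simp only: w[symmetric])
  then obtain b0 T e c where blocks: "length w = b0 + T * m + e" "b0 < m" "e < m" "1 \<le> T"
    "mech_floor \<alpha> \<theta> (b0 + T * m) - mech_floor \<alpha> \<theta> b0 = int T * int c"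
    by (rule mech_abelian_period_blocks[OF less_imp_le[OF assms(1)] assms(2)])
  have "m_block_setting \<alpha> \<delta> a1 a2 r m b0 T e (length w)"
    unfolding m_block_setting_def using assms(1,2,8) cf r blocks(1-4) unfolding a1_def by blast
  from m_block_setting.abelian_period_a1[OF this blocks(5)]
  have "abelian_period w a1" by (simp only: w[symmetric])
  then show ?thesis using \<open>a1 < m\<close> unfolding min_abelian_period_def by auto
qed

end
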